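(* Let $n,k,d$ be positive integers with $d<n$. For every $\mathcal{A}\subset 2^{[n]}$ with $\mathrm{VC}(\triangle\mathcal{A}^k)\le d$, we have $|\mathcal{A}|\le p(n,k,d)$. Moreover there exist families $\mathcal{A}\subset 2^{[n]}$ with $\mathrm{VC}(\triangle\mathcal{A}^k)\le d$ and $|\mathcal{A}|=p(n,k,d)$. That is, the maximum size of $\mathcal{A}\subset2^{[n]}$ with $\mathrm{VC}(\triangle\mathcal{A}^k)\le d$ equals $p(n,k,d)$.
   Context: $[n]=\{1,\dots,n\}$. $\mathrm{VC}(\mathcal{F})$ is the largest cardinality of a $Y\subset[n]$ with $\{S\cap Y:S\in\mathcal{F}\}=2^Y$. $\triangle\mathcal{A}^k=\{S_1\triangle\cdots\triangle S_k: S_i\in\mathcal{A}\}$ and $\cup\mathcal{A}^k=\{S_1\cup\cdots\cup S_k: S_i\in\mathcal{A}\}$ (the $S_i$ need not be distinct). A family $\mathcal{F}\subset2^{[n]}$ is $k$-wise $(n-d)$-union if every member of $\cup\mathcal{F}^k$ has cardinality at most $d$. $p(n,k,d)$ denotes the maximum size of a $k$-wise $(n-d)$-union family $\mathcal{F}\subset 2^{[n]}$. *)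

theory Defs
  imports Main
begin

fun symdiff_pow :: "'a set set \<Rightarrow> nat \<Rightarrow> 'a set set" where
  "symdiff_pow A 0 = {{}}"
| "symdiff_pow A (Suc k) = {(S - T) \<union> (T - S) | S T. S \<in> A \<and> T \<in> symdiff_pow A k}"

fun union_pow :: "'a set set \<Rightarrow> nat \<Rightarrow> 'a set set" where
  "union_pow A 0 = {{}}"
| "union_pow A (Suc k) = {S \<union> T | S T. S \<in> A \<and> T \<in> union_pow A k}"

definition shatters :: "'a set set \<Rightarrow> 'a set \<Rightarrow> bool" where
  "shatters F Y \<longleftrightarrow> {S \<inter> Y | S. S \<in> F} = Pow Y"

text \<open>VC dimension of a family F \<subseteq> 2^[n]: largest cardinality of a shattered Y \<subseteq> [n] (0 if none, via Sup {} = 0 on nat).\<close>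
definition VC :: "nat \<Rightarrow> nat set set \<Rightarrow> nat" where
  "VC n F = Sup {card Y | Y. Y \<subseteq> {1..n} \<and> shatters F Y}"

definition kwise_union_family :: "nat \<Rightarrow> nat \<Rightarrow> nat \<Rightarrow> nat set set \<Rightarrow> bool" where
  "kwise_union_family n k d F \<longleftrightarrow> F \<subseteq> Pow {1..n} \<and> (\<forall>U \<in> union_pow F k. card U \<le> d)"

definition p :: "nat \<Rightarrow> nat \<Rightarrow> nat \<Rightarrow> nat" where
  "p n k d = Max {card F | F. kwise_union_family n k d F}"

end

theory Submission
  imports Defs
begin

text \<open>
  Down-shifting a family towards the empty set in one coordinate preserves its size and can only
  lose shattered sets of its \<open>k\<close>-fold symmetric differences; iterating it ends in a family closed
  under subsets. For such a family \<open>B\<close> every \<open>k\<close>-fold union is shattered by the \<open>k\<close>-fold symmetric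
  differences, since every subset of \<open>S\<^sub>1 \<union> \<dots> \<union> S\<^sub>k\<close> is a symmetric difference of subsets of the
  \<open>S\<^sub>j\<close>. Hence the bound on the VC dimension makes \<open>B\<close> a \<open>k\<close>-wise \<open>(n - d)\<close>-union family of the
  same size. Conversely every \<open>k\<close>-fold symmetric difference lies in a \<open>k\<close>-fold union, so a maximal
  \<open>k\<close>-wise \<open>(n - d)\<close>-union family attains the bound.
\<close>

lemma shatters_iff: "shatters F Y \<longleftrightarrow> (\<forall>W\<subseteq>Y. \<exists>T\<in>F. T \<inter> Y = W)"
proof
  assume "shatters F Y"
  then have "W \<in> {S \<inter> Y | S. S \<in> F}" if "W \<subseteq> Y" for W
    using that unfolding shatters_def by simp
  then show "\<forall>W\<subseteq>Y. \<exists>T\<in>F. T \<inter> Y = W"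
    by blast
next
  assume "\<forall>W\<subseteq>Y. \<exists>T\<in>F. T \<inter> Y = W"
  then have "Pow Y \<subseteq> {S \<inter> Y | S. S \<in> F}"
    by blast
  moreover have "{S \<inter> Y | S. S \<in> F} \<subseteq> Pow Y"
    by blast
  ultimately show "shatters F Y"
    unfolding shatters_def by (rule subset_antisym[rotated])
qed

lemma card_le_VC:
  assumes "Y \<subseteq> {1..n}" "shatters F Y"
  shows "card Y \<le> VC n F"
proof -
  have "bdd_above {card Y | Y. Y \<subseteq> {1..n} \<and> shatters F Y}"
    by (rule bdd_aboveI[of _ n]) (auto dest: card_mono[OF finite_atLeastAtMost])
  then show ?thesis
    unfolding VC_def using assms by (intro cSup_upper) auto
qed

lemma VC_le:
  assumes "\<And>Y. Y \<subseteq> {1..n} \<Longrightarrow> shatters F Y \<Longrightarrow> card Y \<le> d"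
  shows "VC n F \<le> d"
proof (cases "{card Y | Y. Y \<subseteq> {1..n} \<and> shatters F Y} = {}")
  case True
  then show ?thesis unfolding VC_def True by simp
next
  case False
  then show ?thesis unfolding VC_def by (rule cSup_least) (blast intro: assms)
qed

definition down_shift :: "'a \<Rightarrow> 'a set set \<Rightarrow> 'a set \<Rightarrow> 'a set" where
  "down_shift i A S = (if i \<in> S \<and> S - {i} \<notin> A then S - {i} else S)"

definition shift_family :: "'a \<Rightarrow> 'a set set \<Rightarrow> 'a set set" where
  "shift_family i A = down_shift i A ` A"

lemma inj_on_down_shift: "inj_on (down_shift i A) A"
  by (rule inj_onI) (auto simp: down_shift_def split: if_splits)

lemma card_shift_family: "card (shift_family i A) = card A"
  unfolding shift_family_def by (rule card_image[OF inj_on_down_shift])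

lemma shift_family_subset_Pow: "A \<subseteq> Pow X \<Longrightarrow> shift_family i A \<subseteq> Pow X"
  unfolding shift_family_def down_shift_def by auto

lemma sum_card_shift_family_less:
  assumes "finite X" "A \<subseteq> Pow X" "S \<in> A" "i \<in> S" "S - {i} \<notin> A"
  shows "(\<Sum>T\<in>shift_family i A. card T) < (\<Sum>T\<in>A. card T)"
proof -
  have fin: "finite T" if "T \<in> A" for T
    using that assms(1,2) finite_subset by blast
  have "(\<Sum>T\<in>shift_family i A. card T) = (\<Sum>T\<in>A. card (down_shift i A T))"
    unfolding shift_family_def by (simp add: sum.reindex[OF inj_on_down_shift])
  also have "\<dots> < (\<Sum>T\<in>A. card T)"
  proof (rule sum_strict_mono_ex1)
    show "finite A"
      using assms(1,2) by (meson finite_Pow_iff finite_subset)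
    show "\<forall>T\<in>A. card (down_shift i A T) \<le> card T"
      using fin by (auto simp: down_shift_def intro: card_mono)
    have "card (S - {i}) < card S"
      using fin[OF assms(3)] assms(4) by (rule card_Diff1_less)
    then show "\<exists>T\<in>A. card (down_shift i A T) < card T"
      using assms(3-5) by (auto simp: down_shift_def)
  qed
  finally show ?thesis .
qed

definition lifts :: "'a \<Rightarrow> 'a set set \<Rightarrow> 'a set \<Rightarrow> bool set" where
  "lifts i F T = (\<lambda>T'. i \<in> T') ` {T' \<in> F. T' - {i} = T - {i}}"

text \<open>
  The invariant that transfers shattering from the \<open>k\<close>-fold symmetric differences of a shifted family
  back to those of the original: it survives a single shift and is preserved by \<open>sym_diff\<close>.
\<close>
definition represented :: "'a \<Rightarrow> 'a set set \<Rightarrow> 'a set \<Rightarrow> bool" where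
  "represented i F T \<longleftrightarrow> lifts i F T = UNIV \<or> (i \<notin> T \<and> lifts i F T \<noteq> {})"

lemma mem_liftsI: "T' \<in> F \<Longrightarrow> T' - {i} = T - {i} \<Longrightarrow> (i \<in> T') \<in> lifts i F T"
  unfolding lifts_def by (rule imageI) simp

lemma lifts_nonempty_if_represented: "represented i F T \<Longrightarrow> lifts i F T \<noteq> {}"
  unfolding represented_def by auto

lemma sym_diff_Diff: "sym_diff X Y - Z = sym_diff (X - Z) (Y - Z)"
  by blast

lemma lifts_sym_diff:
  assumes "a \<in> lifts i A S" "b \<in> lifts i (symdiff_pow A k) T"
  shows "(a \<noteq> b) \<in> lifts i (symdiff_pow A (Suc k)) (sym_diff S T)"
proof -
  obtain S' where S': "S' \<in> A" "S' - {i} = S - {i}" "a = (i \<in> S')"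
    using assms(1) unfolding lifts_def by blast
  obtain T' where T': "T' \<in> symdiff_pow A k" "T' - {i} = T - {i}" "b = (i \<in> T')"
    using assms(2) unfolding lifts_def by blast
  have "sym_diff S' T' \<in> symdiff_pow A (Suc k)"
    using S'(1) T'(1) by auto
  moreover have "sym_diff S' T' - {i} = sym_diff S T - {i}"
    by (simp only: sym_diff_Diff S'(2) T'(2))
  ultimately have "(i \<in> sym_diff S' T') \<in> lifts i (symdiff_pow A (Suc k)) (sym_diff S T)"
    by (rule mem_liftsI)
  moreover have "(i \<in> sym_diff S' T') = (a \<noteq> b)"
    using S'(3) T'(3) by auto
  ultimately show ?thesis
    by simp
qed

lemma represented_sym_diff:
  assumes S: "represented i A S" and T: "represented i (symdiff_pow A k) T"
  shows "represented i (symdiff_pow A (Suc k)) (sym_diff S T)"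
proof -
  obtain a b where a: "a \<in> lifts i A S" and b: "b \<in> lifts i (symdiff_pow A k) T"
    using lifts_nonempty_if_represented[OF S] lifts_nonempty_if_represented[OF T] by blast
  show ?thesis
  proof (cases "lifts i A S = UNIV \<or> lifts i (symdiff_pow A k) T = UNIV")
    case full: True
    have "c \<in> lifts i (symdiff_pow A (Suc k)) (sym_diff S T)" for c
    proof (cases "lifts i A S = UNIV")
      case True
      have "c = ((c \<noteq> b) \<noteq> b)"
        by blast
      also have "\<dots> \<in> lifts i (symdiff_pow A (Suc k)) (sym_diff S T)"
        using True by (intro lifts_sym_diff[OF _ b]) simp
      finally show ?thesis .
    next
      case False
      then have "lifts i (symdiff_pow A k) T = UNIV"
        using full by simp
      have "c = (a \<noteq> (a \<noteq> c))"
        by blast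
      also have "\<dots> \<in> lifts i (symdiff_pow A (Suc k)) (sym_diff S T)"
        using \<open>lifts i (symdiff_pow A k) T = UNIV\<close> by (intro lifts_sym_diff[OF a]) simp
      finally show ?thesis .
    qed
    then have "lifts i (symdiff_pow A (Suc k)) (sym_diff S T) = UNIV"
      by auto
    then show ?thesis
      unfolding represented_def by simp
  next
    case False
    then have "i \<notin> S" "i \<notin> T"
      using S T unfolding represented_def by simp_all
    then show ?thesis
      using lifts_sym_diff[OF a b] unfolding represented_def by auto
  qed
qed

lemma represented_shift_family:
  assumes "S \<in> shift_family i A"
  shows "represented i A S"
proof -
  obtain S0 where S0: "S0 \<in> A" "S = down_shift i A S0"
    using assms unfolding shift_family_def by blast
  consider (shifted) "i \<in> S0" "S0 - {i} \<notin> A" | (kept_with) "i \<in> S0" "S0 - {i} \<in> A"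
    | (kept_without) "i \<notin> S0"
    by blast
  then show ?thesis
  proof cases
    case shifted
    then have "S = S0 - {i}"
      using S0(2) by (simp add: down_shift_def)
    then have "True \<in> lifts i A S"
      using mem_liftsI[OF S0(1), of i S] shifted by simp
    then show ?thesis
      unfolding represented_def using \<open>S = S0 - {i}\<close> by auto
  next
    case kept_with
    then have "S = S0"
      using S0(2) by (simp add: down_shift_def)
    then have "True \<in> lifts i A S" "False \<in> lifts i A S"
      using mem_liftsI[OF S0(1), of i S] mem_liftsI[OF kept_with(2), of i S] kept_with by simp_all
    then have "lifts i A S = UNIV"
      by (metis (full_types) UNIV_eq_I)
    then show ?thesis
      unfolding represented_def by simp
  next
    case kept_without
    then have "S = S0"
      using S0(2) by (simp add: down_shift_def)
    then have "False \<in> lifts i A S"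
      using mem_liftsI[OF S0(1), of i S] kept_without by simp
    then show ?thesis
      unfolding represented_def using \<open>S = S0\<close> kept_without by auto
  qed
qed

lemma represented_symdiff_pow_shift_family:
  "T \<in> symdiff_pow (shift_family i A) k \<Longrightarrow> represented i (symdiff_pow A k) T"
proof (induction k arbitrary: T)
  case 0
  then show ?case
    by (auto simp: represented_def lifts_def)
next
  case (Suc k)
  then obtain S T0 where "T = sym_diff S T0" "S \<in> shift_family i A"
    "T0 \<in> symdiff_pow (shift_family i A) k"
    by auto
  then show ?case
    using represented_sym_diff represented_shift_family Suc.IH by metis
qed

lemma shatters_if_represented:
  assumes rep: "\<And>T. T \<in> G \<Longrightarrow> represented i F T" and "shatters G Y"
  shows "shatters F Y"
  unfolding shatters_iff
proof (intro allI impI)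
  fix W
  assume "W \<subseteq> Y"
  have traces: "\<exists>T\<in>G. T \<inter> Y = V" if "V \<subseteq> Y" for V
    using \<open>shatters G Y\<close> that unfolding shatters_iff by blast
  show "\<exists>T'\<in>F. T' \<inter> Y = W"
  proof (cases "i \<in> Y")
    case True
    \<comment> \<open>Realise \<open>W\<close> with \<open>i\<close> added; then \<open>i \<in> T\<close> forces both lifts, and we take the one matching \<open>W\<close>.\<close>
    obtain T where "T \<in> G" "T \<inter> Y = insert i W"
      using traces[of "insert i W"] \<open>W \<subseteq> Y\<close> True by blast
    then have "lifts i F T = UNIV"
      using rep unfolding represented_def by blast
    then obtain T' where "T' \<in> F" "T' - {i} = T - {i}" "(i \<in> T') = (i \<in> W)"
      unfolding lifts_def by blast
    then have "T' \<inter> Y = W"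
      using \<open>T \<inter> Y = insert i W\<close> \<open>W \<subseteq> Y\<close> True by blast
    then show ?thesis
      using \<open>T' \<in> F\<close> by blast
  next
    case False
    obtain T where "T \<in> G" "T \<inter> Y = W"
      using traces \<open>W \<subseteq> Y\<close> by blast
    then obtain T' where "T' \<in> F" "T' - {i} = T - {i}"
      using rep unfolding represented_def lifts_def by blast
    then have "T' \<inter> Y = W"
      using \<open>T \<inter> Y = W\<close> False by blast
    then show ?thesis
      using \<open>T' \<in> F\<close> by blast
  qed
qed

lemma shatters_symdiff_pow_of_shift_family:
  "shatters (symdiff_pow (shift_family i A) k) Y \<Longrightarrow> shatters (symdiff_pow A k) Y"
  by (rule shatters_if_represented[OF represented_symdiff_pow_shift_family])

definition down_closed :: "'a set set \<Rightarrow> bool" where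
  "down_closed B \<longleftrightarrow> (\<forall>S\<in>B. \<forall>S'\<subseteq>S. S' \<in> B)"

lemma down_closed_if_closed_under_remove:
  assumes remove: "\<And>S i. S \<in> B \<Longrightarrow> i \<in> S \<Longrightarrow> S - {i} \<in> B"
    and fin: "\<And>S. S \<in> B \<Longrightarrow> finite S"
  shows "down_closed B"
  unfolding down_closed_def
proof (intro ballI allI impI)
  fix S S'
  assume "S \<in> B" "S' \<subseteq> S"
  have "S - D \<in> B" if "finite D" for D
    using that
  proof (induction D rule: finite_induct)
    case empty
    then show ?case
      using \<open>S \<in> B\<close> by simp
  next
    case (insert x D)
    have "S - insert x D = (S - D) - {x}"
      by blast
    then show ?case
      using insert.IH remove[of "S - D" x] by (cases "x \<in> S - D") auto
  qed
  moreover have "finite (S - S')"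
    using fin[OF \<open>S \<in> B\<close>] by simp
  ultimately have "S - (S - S') \<in> B" .
  then show "S' \<in> B"
    using \<open>S' \<subseteq> S\<close> by (simp add: double_diff)
qed

lemma exists_down_closed_shifted_family:
  assumes "finite X" "A \<subseteq> Pow X"
  shows "\<exists>B \<subseteq> Pow X. card B = card A \<and> down_closed B
           \<and> (\<forall>Y. shatters (symdiff_pow B k) Y \<longrightarrow> shatters (symdiff_pow A k) Y)"
  using assms(2)
proof (induction "\<Sum>S\<in>A. card S" arbitrary: A rule: less_induct)
  case less
  show ?case
  proof (cases "\<exists>S\<in>A. \<exists>i\<in>S. S - {i} \<notin> A")
    case True
    then obtain S i where "S \<in> A" "i \<in> S" "S - {i} \<notin> A"
      by blast
    then have "(\<Sum>T\<in>shift_family i A. card T) < (\<Sum>T\<in>A. card T)"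
      by (rule sum_card_shift_family_less[OF assms(1) less.prems])
    from less.hyps[OF this shift_family_subset_Pow[OF less.prems]]
    obtain B where B: "B \<subseteq> Pow X" "card B = card A" "down_closed B"
      and shatters_shifted:
        "\<forall>Y. shatters (symdiff_pow B k) Y \<longrightarrow> shatters (symdiff_pow (shift_family i A) k) Y"
      unfolding card_shift_family by blast
    have "shatters (symdiff_pow A k) Y" if "shatters (symdiff_pow B k) Y" for Y
      by (rule shatters_symdiff_pow_of_shift_family[of i]) (use shatters_shifted that in simp)
    with B show ?thesis
      by (intro exI[of _ B]) simp
  next
    case False
    have "down_closed A"
    proof (rule down_closed_if_closed_under_remove)
      show "\<And>S i. S \<in> A \<Longrightarrow> i \<in> S \<Longrightarrow> S - {i} \<in> A"
        using False by blast
      show "finite S" if "S \<in> A" for S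
        using that less.prems finite_subset[OF _ assms(1)] by blast
    qed
    then show ?thesis
      using less.prems by (intro exI[of _ A]) simp
  qed
qed

lemma subset_of_union_pow_in_symdiff_pow:
  assumes "down_closed B"
  shows "U \<in> union_pow B k \<Longrightarrow> W \<subseteq> U \<Longrightarrow> W \<in> symdiff_pow B k"
proof (induction k arbitrary: U W)
  case 0
  then show ?case
    by auto
next
  case (Suc k)
  then obtain S U0 where U: "U = S \<union> U0" "S \<in> B" "U0 \<in> union_pow B k"
    by auto
  have "W \<inter> S \<in> B"
    using \<open>down_closed B\<close> U(2) unfolding down_closed_def by blast
  moreover have "W - S \<in> symdiff_pow B k"
    using Suc U by blast
  moreover have "W = sym_diff (W \<inter> S) (W - S)"
    by blast
  ultimately show ?case
    by auto
qed

lemma shatters_union_pow: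
  assumes "down_closed B" "U \<in> union_pow B k"
  shows "shatters (symdiff_pow B k) U"
  unfolding shatters_iff
  using subset_of_union_pow_in_symdiff_pow[OF assms] by (metis Int_absorb2)

lemma symdiff_pow_subset_union_pow:
  "T \<in> symdiff_pow F k \<Longrightarrow> \<exists>U\<in>union_pow F k. T \<subseteq> U"
proof (induction k arbitrary: T)
  case 0
  then show ?case
    by auto
next
  case (Suc k)
  then obtain S T0 where T: "T = sym_diff S T0" "S \<in> F" "T0 \<in> symdiff_pow F k"
    by auto
  then obtain U0 where "U0 \<in> union_pow F k" "T0 \<subseteq> U0"
    using Suc.IH by blast
  then have "S \<union> U0 \<in> union_pow F (Suc k)" "T \<subseteq> S \<union> U0"
    using T by auto
  then show ?case
    by blast
qed

lemma union_pow_subset_Pow: "F \<subseteq> Pow X \<Longrightarrow> union_pow F k \<subseteq> Pow X"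
  by (induction k) auto

lemma finite_kwise_union_family_cards: "finite {card F | F. kwise_union_family n k d F}"
proof (rule finite_subset)
  show "{card F | F. kwise_union_family n k d F} \<subseteq> card ` Pow (Pow {1..n})"
    unfolding kwise_union_family_def by auto
qed simp

lemma card_le_p: "kwise_union_family n k d F \<Longrightarrow> card F \<le> p n k d"
  unfolding p_def using finite_kwise_union_family_cards by (auto intro: Max_ge)

lemma p_attained: "\<exists>F. kwise_union_family n k d F \<and> card F = p n k d"
proof -
  \<comment> \<open>The empty family qualifies: \<open>union_pow {} k\<close> is \<open>{{}}\<close> or \<open>{}\<close>.\<close>
  have "kwise_union_family n k d {}"
    unfolding kwise_union_family_def by (cases k) auto
  then have "{card F | F. kwise_union_family n k d F} \<noteq> {}"
    by blast
  then have "p n k d \<in> {card F | F. kwise_union_family n k d F}"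
    unfolding p_def by (rule Max_in[OF finite_kwise_union_family_cards])
  then show ?thesis
    by auto
qed

lemma card_le_p_if_VC_symdiff_pow_le:
  assumes A: "A \<subseteq> Pow {1..n}" and VC: "VC n (symdiff_pow A k) \<le> d"
  shows "card A \<le> p n k d"
proof -
  obtain B where B: "B \<subseteq> Pow {1..n}" "card B = card A" "down_closed B"
    "\<And>Y. shatters (symdiff_pow B k) Y \<Longrightarrow> shatters (symdiff_pow A k) Y"
    using exists_down_closed_shifted_family[OF finite_atLeastAtMost A, of k] by blast
  have "card U \<le> d" if "U \<in> union_pow B k" for U
  proof -
    have "U \<subseteq> {1..n}"
      using union_pow_subset_Pow[OF B(1)] that by blast
    moreover have "shatters (symdiff_pow A k) U"
      using B(4) shatters_union_pow[OF B(3) that] .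
    ultimately show ?thesis
      using card_le_VC VC order_trans by blast
  qed
  then have "kwise_union_family n k d B"
    unfolding kwise_union_family_def using B(1) by blast
  then show ?thesis
    using card_le_p B(2) by metis
qed

lemma VC_symdiff_pow_le_if_kwise_union_family:
  assumes F: "kwise_union_family n k d F"
  shows "VC n (symdiff_pow F k) \<le> d"
proof (rule VC_le)
  fix Y
  assume "shatters (symdiff_pow F k) Y"
  then obtain T where "T \<in> symdiff_pow F k" "T \<inter> Y = Y"
    unfolding shatters_iff by blast
  then obtain U where U: "U \<in> union_pow F k" "Y \<subseteq> U"
    using symdiff_pow_subset_union_pow by blast
  have "U \<subseteq> {1..n}"
    using union_pow_subset_Pow[of F "{1..n}" k] F U(1) unfolding kwise_union_family_def by blast
  then have "card Y \<le> card U"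
    using U(2) by (meson card_mono finite_atLeastAtMost finite_subset)
  also have "\<dots> \<le> d"
    using F U(1) unfolding kwise_union_family_def by blast
  finally show "card Y \<le> d" .
qed

theorem theorem5:
  fixes n k d :: nat
  assumes "0 < n" "0 < k" "0 < d" "d < n"
  shows "(\<forall>A. A \<subseteq> Pow {1..n} \<and> VC n (symdiff_pow A k) \<le> d \<longrightarrow> card A \<le> p n k d)
       \<and> (\<exists>A. A \<subseteq> Pow {1..n} \<and> VC n (symdiff_pow A k) \<le> d \<and> card A = p n k d)"
proof
  show "\<forall>A. A \<subseteq> Pow {1..n} \<and> VC n (symdiff_pow A k) \<le> d \<longrightarrow> card A \<le> p n k d"
    using card_le_p_if_VC_symdiff_pow_le by blast
  obtain F where F: "kwise_union_family n k d F" "card F = p n k d"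
    using p_attained by blast
  have "F \<subseteq> Pow {1..n}"
    using F(1) unfolding kwise_union_family_def by blast
  moreover have "VC n (symdiff_pow F k) \<le> d"
    by (rule VC_symdiff_pow_le_if_kwise_union_family[OF F(1)])
  ultimately show "\<exists>A. A \<subseteq> Pow {1..n} \<and> VC n (symdiff_pow A k) \<le> d \<and> card A = p n k d"
    using F(2) by blast
qed

end
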